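(* For every integer $d\ge2$ there exists a simply connected domain $\Omega_+\subset\mathbb C$ with boundary $\Gamma^\perp=\partial\Omega_+$ such that: (i) $\Omega_+$ contains $\{x\in\mathbb R:x>-d^{-1}\}$; (ii) $\Gamma^\perp=\Gamma^\perp_{\rm up}\cup\Gamma^\perp_{\rm down}$, where $\Gamma^\perp_{\rm up}$ is a curve from the point $-d^{-1}$ to infinity lying in the upper half-plane except for its endpoint $-d^{-1}$, and $\Gamma^\perp_{\rm down}=\{\bar w:w\in\Gamma^\perp_{\rm up}\}$; (iii) the map $w\mapsto w(w+1)^{d-1}$ is a bijection from $\Omega_+$ onto $\mathbb C\setminus(-\infty,-(r^{\rm sf})^d]$, where $r^{\rm sf}=d^{-1/d}(1-d^{-1})^{1-1/d}$; (iv) the map $w\mapsto w(w+1)^{d-1}$ is a bijection from $\Gamma^\perp_{\rm up}$ onto $(-\infty,-(r^{\rm sf})^d]$; (v) if $w\in\Omega_+\cup\Gamma^\perp$ then $w+c\in\Omega_+$ for every constant $c>0$. *)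

theory Defs
  imports "HOL-Analysis.Analysis"
begin

definition sf_map :: "nat \<Rightarrow> complex \<Rightarrow> complex" where
  "sf_map d w = w * (w + 1) ^ (d - 1)"

definition r_sf :: "nat \<Rightarrow> real" where
  "r_sf d = real d powr (- 1 / real d) * (1 - 1 / real d) powr (1 - 1 / real d)"

end

theory Submission
  imports Defs "HOL-Probability.Sinc_Integral"
begin

(* For w in the upper half-plane let a = Arg (w + 1) and b = Arg w, so that 0 < a < b < pi; by the
   law of sines w = e^(ib) sin a / sin (b - a). With p = b + (d - 1) a this gives
   w (w + 1)^(d-1) = e^(ip) M_p(a), M_p(a) = sin a sin^(d-1) (p - (d - 1) a) / sin^d (p - d a).
   For fixed p the logarithmic derivative of M_p is a sum of squares over a positive number, so M_p
   increases strictly on (0, p/d), from 0 to infinity if p < pi. Hence the part {p < pi} of the upper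
   half-plane is mapped bijectively onto the upper half-plane, and its boundary {p = pi} is a curve
   that is mapped monotonically onto the slit (-infinity, -(r_sf d)^d]. Omega consists of this part,
   its mirror image and the ray (-1/d, infinity), on which x (x + 1)^(d-1) increases from
   -(r_sf d)^d. Shifting w to the right decreases both arguments, which gives (v); Omega is simply
   connected since, by invariance of domain, it is homeomorphic to the starlike slit plane. *)

lemma Arg_eq_pi_half_minus_arctan:
  assumes "0 < Im z"
  shows "Arg z = pi/2 - arctan (Re z / Im z)"
proof -
  have z: "z \<noteq> 0" using assms by auto
  have Arg: "Arg z = Im (Ln z)" using Arg_eq_Im_Ln z by blast
  consider "Re z > 0" | "Re z < 0" | "Re z = 0" by linarith
  then show ?thesis
  proof cases
    case 1
    have "arctan (Im z / Re z) = pi/2 - arctan (Re z / Im z)"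
      using arctan_inverse[of "Im z / Re z"] 1 assms by (simp add: inverse_eq_divide)
    then show ?thesis using Arg Im_Ln_eq[OF z] 1 by simp
  next
    case 2
    have "- Im z / Re z > 0" using 2 assms by (simp add: divide_pos_neg)
    then have "arctan (- Im z / Re z) = pi/2 - arctan (- Re z / Im z)"
      using arctan_inverse[of "- Im z / Re z"] by (simp add: inverse_eq_divide)
    then have "arctan (Im z / Re z) + pi = pi/2 - arctan (Re z / Im z)"
      by (simp add: arctan_minus)
    then show ?thesis using Arg Im_Ln_eq[OF z] 2 assms by simp
  next
    case 3
    then show ?thesis using Arg Im_Ln_eq[OF z] assms by simp
  qed
qed

lemma Arg_eq_pi_minus_arctan:
  assumes "0 < Im z" "Re z < 0"
  shows "Arg z = pi - arctan (Im z / - Re z)"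
proof -
  have "arctan (inverse (Im z / - Re z)) = pi/2 - arctan (Im z / - Re z)"
    using assms by (intro arctan_inverse) (simp add: divide_pos_neg)
  then have "arctan (- Re z / Im z) = pi/2 - arctan (Im z / - Re z)"
    by (simp add: inverse_eq_divide)
  then show ?thesis using Arg_eq_pi_half_minus_arctan[OF assms(1)] by (simp add: arctan_minus)
qed

lemma Arg_add_of_real_less:
  assumes "0 < Im z" "0 < c"
  shows "Arg (z + of_real c) < Arg z"
proof -
  have "Re z / Im z < (Re z + c) / Im z" using assms by (simp add: divide_strict_right_mono)
  then show ?thesis
    using Arg_eq_pi_half_minus_arctan[of z] Arg_eq_pi_half_minus_arctan[of "z + of_real c"] assms
    by (simp add: arctan_less_iff)
qed

lemma law_of_sines_upper_half:
  assumes "0 < Im w"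
  shows "0 < Arg (w + 1)" "Arg (w + 1) < Arg w" "Arg w < pi"
    and "w = cis (Arg w) * of_real (sin (Arg (w + 1)) / sin (Arg w - Arg (w + 1)))"
proof -
  define a b where "a = Arg (w + 1)" and "b = Arg w"
  show a: "0 < Arg (w + 1)" and b: "Arg w < pi"
    using Arg_lt_pi[of w] Arg_lt_pi[of "w + 1"] assms by auto
  show ab: "Arg (w + 1) < Arg w" using Arg_add_of_real_less[OF assms, of 1] by simp
  have sba: "sin (b - a) > 0" using a b ab by (intro sin_gt_zero) (auto simp: a_def b_def)
  define R0 R1 where "R0 = cmod w" and "R1 = cmod (w + 1)"
  have w: "w = of_real R0 * cis b" and w1: "w + 1 = of_real R1 * cis a"
    using rcis_cmod_Arg[of w] rcis_cmod_Arg[of "w + 1"]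
    by (simp_all add: rcis_def R0_def R1_def a_def b_def)
  then have "of_real R1 * cis a - of_real R0 * cis b = 1" by (metis add_diff_cancel_left')
  then have e1: "R1 * cos a - R0 * cos b = 1" and e2: "R1 * sin a - R0 * sin b = 0"
    by (auto simp: complex_eq_iff)
  have "sin a * (R1 * cos a - R0 * cos b) - cos a * (R1 * sin a - R0 * sin b) = sin a"
    using e1 e2 by simp
  then have "R0 * sin (b - a) = sin a" by (simp add: sin_diff algebra_simps)
  then have "R0 = sin a / sin (b - a)" using sba by (simp add: field_simps)
  then show "w = cis b * of_real (sin a / sin (b - a))" using w by (simp add: mult.commute)
qed

lemma arctan_add_le:
  assumes "0 \<le> a" "0 \<le> b"
  shows "arctan (a + b) \<le> arctan a + arctan b"
proof -
  define h where "h t = arctan a + arctan t - arctan (a + t)" for t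
  have "h 0 \<le> h b"
  proof (rule DERIV_nonneg_imp_nondecreasing[OF assms(2)])
    fix t assume t: "0 \<le> t" "t \<le> b"
    have "(h has_real_derivative inverse (1 + t\<^sup>2) - inverse (1 + (a + t)\<^sup>2)) (at t)"
      unfolding h_def by (auto intro!: derivative_eq_intros)
    moreover have "inverse (1 + (a + t)\<^sup>2) \<le> inverse (1 + t\<^sup>2)"
    proof -
      have "t\<^sup>2 \<le> (a + t)\<^sup>2" using t assms by (intro power_mono) auto
      then show ?thesis by (intro le_imp_inverse_le) (auto intro: add_pos_nonneg)
    qed
    ultimately show "\<exists>y. (h has_real_derivative y) (at t) \<and> 0 \<le> y" by force
  qed
  then show ?thesis by (simp add: h_def)
qed

lemma arctan_of_nat_mult_le:
  assumes "0 \<le> u"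
  shows "arctan (real n * u) \<le> real n * arctan u"
proof (induction n)
  case 0
  then show ?case by simp
next
  case (Suc n)
  have "arctan (real (Suc n) * u) = arctan (real n * u + u)" by (simp add: algebra_simps)
  also have "\<dots> \<le> arctan (real n * u) + arctan u" using assms by (intro arctan_add_le) auto
  also have "\<dots> \<le> real n * arctan u + arctan u" using Suc by simp
  finally show ?case by (simp add: algebra_simps)
qed

lemma divide_one_plus_square_le_arctan:
  assumes "0 \<le> v"
  shows "v / (1 + v\<^sup>2) \<le> arctan v"
proof -
  define h where "h t = arctan t - t / (1 + t\<^sup>2)" for t
  have "h 0 \<le> h v"
  proof (rule DERIV_nonneg_imp_nondecreasing[OF assms])
    fix t :: real
    have q: "1 + t\<^sup>2 > 0" by (simp add: add_pos_nonneg)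
    have "(h has_real_derivative inverse (1 + t\<^sup>2) - (1 * (1 + t\<^sup>2) - t * (2 * t)) / (1 + t\<^sup>2)\<^sup>2) (at t)"
      unfolding h_def using q by (auto intro!: derivative_eq_intros simp: power2_eq_square)
    moreover have "inverse r - (1 * r - t * (2 * t)) / r\<^sup>2 = 2 * t\<^sup>2 / r\<^sup>2" if "r \<noteq> 0" for r
      using that by (simp add: field_simps power2_eq_square)
    ultimately show "\<exists>y. (h has_real_derivative y) (at t) \<and> 0 \<le> y" using q by force
  qed
  then show ?thesis by (simp add: h_def)
qed

lemma strict_mono_on_atLeast_if_continuous:
  fixes f :: "real \<Rightarrow> real"
  assumes "continuous_on {a..} f" "strict_mono_on {a<..} f"
  shows "strict_mono_on {a..} f"
proof (rule strict_mono_onI)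
  fix s t assume st: "s \<in> {a..}" "t \<in> {a..}" "s < t"
  show "f s < f t"
  proof (cases "s = a")
    case True
    define m where "m = (a + t) / 2"
    have m: "a < m" "m < t" using st True by (auto simp: m_def)
    have "(f \<longlongrightarrow> f a) (at a within {a..})" using assms(1)
      by (simp add: continuous_on_def)
    then have "(f \<longlongrightarrow> f a) (at_right a)" by (simp add: at_within_Ici_at_right)
    moreover have "\<forall>\<^sub>F x in at_right a. f x \<le> f m"
      using eventually_at_right_real[OF m(1)]
      by eventually_elim (use assms(2) in \<open>auto intro: strict_mono_on_leD\<close>)
    ultimately have "f a \<le> f m" by (rule tendsto_upperbound) simp
    also have "f m < f t" by (rule strict_mono_onD[OF assms(2)]) (use m in auto)
    finally show ?thesis using True by simp
  next
    case False
    show ?thesis by (rule strict_mono_onD[OF assms(2)]) (use st False in auto)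
  qed
qed

lemma strict_mono_on_bij_betw_atLeast:
  fixes f :: "real \<Rightarrow> real"
  assumes "continuous_on {a..} f" "strict_mono_on {a..} f" "filterlim f at_top at_top"
  shows "bij_betw f {a..} {f a..}"
proof -
  have "f ` {a..} \<subseteq> {f a..}" using strict_mono_on_leD[OF assms(2)] by auto
  moreover have "y \<in> f ` {a..}" if y: "f a \<le> y" for y
  proof -
    have "\<forall>\<^sub>F x in at_top. a \<le> x \<and> y \<le> f x"
      using eventually_ge_at_top[of a] filterlim_at_top[THEN iffD1, OF assms(3), rule_format, of y]
      by eventually_elim auto
    then obtain b where b: "a \<le> b" "y \<le> f b"
      using eventually_happens'[OF trivial_limit_at_top_linorder] by blast
    have "continuous_on {a..b} f" using assms(1) by (rule continuous_on_subset) auto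
    then obtain x where "a \<le> x" "x \<le> b" "f x = y" using IVT'[of f a y b] y b by auto
    then show ?thesis by auto
  qed
  ultimately show ?thesis
    using strict_mono_on_imp_inj_on[OF assms(2)] by (auto simp: bij_betw_def)
qed

lemma strict_mono_on_bij_betw_greaterThan:
  fixes f :: "real \<Rightarrow> real"
  assumes "continuous_on {a..} f" "strict_mono_on {a..} f" "filterlim f at_top at_top"
  shows "bij_betw f {a<..} {f a<..}"
proof -
  have "bij_betw f ({a..} - {a}) ({f a..} - {f a})"
    using strict_mono_on_bij_betw_atLeast[OF assms] by (rule bij_betw_DiffI) auto
  moreover have "{a..} - {a} = {a<..}" "{f a..} - {f a} = {f a<..}" by auto
  ultimately show ?thesis by simp
qed

lemma strict_mono_on_bij_betw_greaterThanLessThan: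
  fixes f :: "real \<Rightarrow> real"
  assumes "a < b" "continuous_on {a<..<b} f" "strict_mono_on {a<..<b} f"
    and "(f \<longlongrightarrow> c) (at_right a)" "filterlim f at_top (at_left b)"
  shows "bij_betw f {a<..<b} {c<..}"
proof -
  have "c < f x" if x: "x \<in> {a<..<b}" for x
  proof -
    define y where "y = (a + x) / 2"
    have y: "a < y" "y \<in> {a<..<b}" "y < x" using x by (auto simp: y_def)
    have "\<forall>\<^sub>F z in at_right a. f z \<le> f y"
      using eventually_at_right_real[OF y(1)]
      by eventually_elim (use assms(3) y in \<open>auto intro: strict_mono_on_leD\<close>)
    then have "c \<le> f y" using assms(4) by (intro tendsto_upperbound) auto
    also have "f y < f x" using strict_mono_onD[OF assms(3) y(2) x y(3)] .
    finally show ?thesis .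
  qed
  moreover have "y \<in> f ` {a<..<b}" if "c < y" for y
  proof -
    have "\<forall>\<^sub>F z in at_right a. z \<in> {a<..<b} \<and> f z < y"
      using eventually_at_right_real[OF assms(1)] order_tendstoD(2)[OF assms(4) that]
      by eventually_elim auto
    then obtain z1 where z1: "z1 \<in> {a<..<b}" "f z1 < y"
      using eventually_happens'[OF trivial_limit_at_right_real] by blast
    have "\<forall>\<^sub>F z in at_left b. z \<in> {a<..<b} \<and> y < f z"
      using eventually_at_left_real[OF assms(1)]
        assms(5)[unfolded filterlim_at_top_dense, rule_format, of y]
      by eventually_elim auto
    then obtain z2 where z2: "z2 \<in> {a<..<b}" "y < f z2"
      using eventually_happens'[OF trivial_limit_at_left_real] by blast
    have "z1 \<le> z2" using strict_mono_on_leD[OF assms(3) z2(1) z1(1)] z1 z2 by force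
    moreover have "continuous_on {z1..z2} f"
      using z1(1) z2(1) by (intro continuous_on_subset[OF assms(2)]) auto
    ultimately obtain z where "z1 \<le> z" "z \<le> z2" "f z = y"
      using IVT'[of f z1 y z2] z1 z2 by force
    moreover have "z \<in> {a<..<b}" using calculation z1(1) z2(1) by auto
    ultimately show ?thesis by blast
  qed
  ultimately show ?thesis
    using strict_mono_on_imp_inj_on[OF assms(3)] by (auto simp: bij_betw_def)
qed

lemma mem_of_real_image_iff: "z \<in> of_real ` A \<longleftrightarrow> Im z = 0 \<and> Re z \<in> A"
  by (auto simp: complex_eq_iff image_iff)

lemma mem_cnj_image_iff: "z \<in> cnj ` A \<longleftrightarrow> cnj z \<in> A"
  by (metis complex_cnj_cnj image_iff)

lemma bij_betw_cnj_image: "bij_betw cnj A (cnj ` A)"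
  by (rule inj_on_imp_bij_betw) (auto intro: inj_onI)

lemma bij_betw_of_real_image: "bij_betw complex_of_real A (of_real ` A)"
  by (rule inj_on_imp_bij_betw) (auto intro: inj_onI)

lemma open_cnj_image: "open S \<Longrightarrow> open (cnj ` S)"
  unfolding image_cnj_conv_vimage_cnj by (intro open_vimage) auto

lemma starlike_slit_plane:
  assumes "0 < R"
  shows "starlike (UNIV - complex_of_real ` {.. - R})"
  unfolding starlike_def
proof (intro bexI ballI subsetI)
  show "0 \<in> UNIV - complex_of_real ` {.. - R}" using assms by (auto simp: mem_of_real_image_iff)
next
  fix x z :: complex assume x: "x \<in> UNIV - of_real ` {.. - R}" and "z \<in> closed_segment 0 x"
  then obtain u where u: "0 \<le> u" "u \<le> 1" "z = u *\<^sub>R x" by (auto simp: in_segment)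
  show "z \<in> UNIV - of_real ` {.. - R}"
  proof (rule ccontr)
    assume "z \<notin> UNIV - of_real ` {.. - R}"
    then have zi: "u * Im x = 0" "u * Re x \<le> - R" using u(3)
      by (auto simp: mem_of_real_image_iff)
    then have "Im x = 0" using assms by auto
    have "Re x < 0"
    proof (rule ccontr)
      assume "\<not> Re x < 0"
      then have "0 \<le> u * Re x" using u(1) by simp
      then show False using zi(2) assms by linarith
    qed
    then have "1 * Re x \<le> u * Re x" using u(2) by (intro mult_right_mono_neg) auto
    then have "x \<in> of_real ` {.. - R}" using zi(2) \<open>Im x = 0\<close>
      by (simp add: mem_of_real_image_iff)
    then show False using x by simp
  qed
qed

section \<open>Polar coordinates for w (w + 1)^(d-1)\<close>

definition sf_arg :: "nat \<Rightarrow> complex \<Rightarrow> real" where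
  "sf_arg d w = Arg w + real (d - 1) * Arg (w + 1)"

text \<open>By the law of sines, the point w of the upper half-plane with sf_arg d w = p and
  Arg (w + 1) = a.\<close>
definition sf_point :: "nat \<Rightarrow> real \<Rightarrow> real \<Rightarrow> complex" where
  "sf_point d p a = cis (p - real (d - 1) * a) * of_real (sin a / sin (p - real d * a))"

definition sf_modulus :: "nat \<Rightarrow> real \<Rightarrow> real \<Rightarrow> real" where
  "sf_modulus d p a = sin a * sin (p - real (d - 1) * a) ^ (d - 1) / sin (p - real d * a) ^ d"

lemma cis_sin_add_sin_diff:
  "cis b * of_real (sin a) + of_real (sin (b - a)) = cis a * of_real (sin b)"
  by (simp add: complex_eq_iff sin_diff algebra_simps)

lemma sf_point_add_1:
  assumes "1 \<le> d" "sin (p - real d * a) \<noteq> 0"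
  shows "sf_point d p a + 1 = cis a * of_real (sin (p - real (d - 1) * a) / sin (p - real d * a))"
proof -
  define b where "b = p - real (d - 1) * a"
  have c: "p - real d * a = b - a" using assms(1) by (simp add: b_def of_nat_diff algebra_simps)
  have s: "complex_of_real (sin (b - a)) \<noteq> 0" using assms c by simp
  have W: "sf_point d p a = cis b * of_real (sin a) / of_real (sin (b - a))"
    unfolding sf_point_def c b_def[symmetric] by simp
  have "sf_point d p a + 1 = (cis b * of_real (sin a) + of_real (sin (b - a))) / of_real (sin (b - a))"
    unfolding W using s by (simp add: field_simps)
  also have "\<dots> = cis a * of_real (sin b) / of_real (sin (b - a))"
    by (simp only: cis_sin_add_sin_diff)
  finally show ?thesis unfolding c b_def[symmetric] by simp
qed

lemma sf_map_sf_point: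
  assumes "1 \<le> d" "sin (p - real d * a) \<noteq> 0"
  shows "sf_map d (sf_point d p a) = cis p * of_real (sf_modulus d p a)"
proof -
  define n b c where "n = d - 1" and "b = p - real n * a" and "c = p - real d * a"
  have d: "d = Suc n" using assms(1) by (simp add: n_def)
  have "sf_map d (sf_point d p a) = sf_point d p a * (sf_point d p a + 1) ^ n"
    by (simp add: sf_map_def n_def)
  also have "\<dots> = cis b * of_real (sin a / sin c) * (cis a * of_real (sin b / sin c)) ^ n"
    using sf_point_add_1[OF assms] by (simp add: sf_point_def b_def c_def n_def)
  also have "\<dots> = (cis b * cis a ^ n) * of_real (sin a * sin b ^ n / (sin c ^ n * sin c))"
    by (simp add: power_mult_distrib power_divide field_simps)
  also have "cis b * cis a ^ n = cis p" by (simp add: Complex.DeMoivre cis_mult b_def)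
  also have "sin a * sin b ^ n / (sin c ^ n * sin c) = sf_modulus d p a"
    unfolding sf_modulus_def b_def c_def by (simp add: d mult.commute)
  finally show ?thesis .
qed

lemma sf_angle_bounds:
  assumes "2 \<le> d" "0 < a" "real d * a < p" "p \<le> pi"
  shows "a < pi" "0 < p - real (d - 1) * a" "p - real (d - 1) * a < pi"
    and "0 < p - real d * a" "p - real d * a < pi"
proof -
  have "2 * a \<le> real d * a" using assms(1,2) by (intro mult_right_mono) auto
  moreover have "real (d - 1) * a = real d * a - a" using assms(1)
    by (simp add: of_nat_diff algebra_simps)
  ultimately show "a < pi" "0 < p - real (d - 1) * a" "p - real (d - 1) * a < pi"
    and "0 < p - real d * a" "p - real d * a < pi"
    using assms(2-4) by linarith+
qed

lemma sf_sines_pos: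
  assumes "2 \<le> d" "0 < a" "real d * a < p" "p \<le> pi"
  shows "0 < sin a" "0 < sin (p - real (d - 1) * a)" "0 < sin (p - real d * a)"
  using sf_angle_bounds[OF assms] assms(2) by (auto intro!: sin_gt_zero)

lemma sf_modulus_pos:
  assumes "2 \<le> d" "0 < a" "real d * a < p" "p \<le> pi"
  shows "0 < sf_modulus d p a"
  using sf_sines_pos[OF assms] by (simp add: sf_modulus_def)

lemma sf_point_polar:
  assumes "2 \<le> d" "0 < a" "real d * a < p" "p \<le> pi"
  shows "Arg (sf_point d p a) = p - real (d - 1) * a" "Arg (sf_point d p a + 1) = a"
    and "0 < Im (sf_point d p a)"
proof -
  note sines = sf_sines_pos[OF assms] and ranges = sf_angle_bounds[OF assms]
  have W1: "sf_point d p a + 1 = cis a * of_real (sin (p - real (d - 1) * a) / sin (p - real d * a))"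
    using sf_point_add_1[of d p a] assms(1) sines(3) by simp
  show "Arg (sf_point d p a) = p - real (d - 1) * a"
    using sines ranges by (simp add: sf_point_def Arg_cis)
  show "Arg (sf_point d p a + 1) = a"
    using sines ranges assms(2) by (simp add: W1 Arg_cis)
  show "0 < Im (sf_point d p a)"
    using sines ranges by (simp add: sf_point_def sin_gt_zero)
qed

lemma sf_arg_sf_point:
  assumes "2 \<le> d" "0 < a" "real d * a < p" "p \<le> pi"
  shows "sf_arg d (sf_point d p a) = p"
  using sf_point_polar[OF assms] by (simp add: sf_arg_def)

lemma sf_point_sf_arg:
  assumes "1 \<le> d" "0 < Im w"
  shows "0 < Arg (w + 1)" "real d * Arg (w + 1) < sf_arg d w"
    and "sf_point d (sf_arg d w) (Arg (w + 1)) = w"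
proof -
  note L = law_of_sines_upper_half[OF assms(2)]
  have b: "sf_arg d w - real (d - 1) * Arg (w + 1) = Arg w" by (simp add: sf_arg_def)
  have c: "sf_arg d w - real d * Arg (w + 1) = Arg w - Arg (w + 1)"
    using assms(1) by (simp add: sf_arg_def of_nat_diff algebra_simps)
  show "0 < Arg (w + 1)" using L(1) .
  show "real d * Arg (w + 1) < sf_arg d w" using c L(2) by simp
  show "sf_point d (sf_arg d w) (Arg (w + 1)) = w" unfolding sf_point_def b c
    by (rule L(4)[symmetric])
qed

lemma sf_map_polar:
  assumes "2 \<le> d" "0 < Im w" "sf_arg d w \<le> pi"
  shows "sf_map d w = cis (sf_arg d w) * of_real (sf_modulus d (sf_arg d w) (Arg (w + 1)))"
proof -
  have d: "1 \<le> d" using assms(1) by simp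
  note w = sf_point_sf_arg[OF d assms(2)]
  have "sin (sf_arg d w - real d * Arg (w + 1)) \<noteq> 0"
    using sf_sines_pos(3)[OF assms(1) w(1,2) assms(3)] by simp
  then show ?thesis using sf_map_sf_point[OF d] w(3) by metis
qed

lemma sf_log_modulus_deriv_pos:
  assumes "2 \<le> d" "0 < a" "real d * a < p" "p \<le> pi"
  shows "\<exists>D>0. ((\<lambda>a. ln (sin a) + real (d - 1) * ln (sin (p - real (d - 1) * a))
                    - real d * ln (sin (p - real d * a))) has_real_derivative D) (at a)"
proof -
  obtain n where d: "d = Suc n" "1 \<le> n" using assms(1) by (cases d) auto
  define c where "c = p - real d * a"
  have b: "p - real n * a = a + c" by (simp add: c_def d algebra_simps)
  have sines: "0 < sin a" "0 < sin (p - real n * a)" "0 < sin (p - real d * a)"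
    using sf_sines_pos[OF assms] by (simp_all add: d)
  define sa ca sb cb sc cc where "sa = sin a" and "ca = cos a" and "sb = sin (a + c)"
    and "cb = cos (a + c)" and "sc = sin c" and "cc = cos c"
  have pos: "0 < sa" "0 < sb" "0 < sc" using sines by (simp_all add: sa_def sb_def sc_def b c_def)
  define D where "D = ca / sa - real n * real n * cb / sb + real d * real d * cc / sc"
  have "((\<lambda>a. ln (sin a) + real n * ln (sin (p - real n * a)) - real d * ln (sin (p - real d * a)))
      has_real_derivative (cos a / sin a + real n * (- real n * cos (p - real n * a) / sin (p - real n * a))
         - real d * (- real d * cos (p - real d * a) / sin (p - real d * a)))) (at a)"
    using sines by (auto intro!: derivative_eq_intros simp: field_simps)
  also have "cos a / sin a + real n * (- real n * cos (p - real n * a) / sin (p - real n * a))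
         - real d * (- real d * cos (p - real d * a) / sin (p - real d * a)) = D"
    unfolding D_def b c_def[symmetric]
    by (simp add: sa_def ca_def sb_def cb_def sc_def cc_def field_simps)
  finally have deriv: "((\<lambda>a. ln (sin a) + real n * ln (sin (p - real n * a))
      - real d * ln (sin (p - real d * a))) has_real_derivative D) (at a)" .
  \<comment> \<open>times \<open>sin a sin (a + c) sin c\<close>, the logarithmic derivative is a sum of squares\<close>
  have "D * (sa * sb * sc) = ca * sb * sc - (real n)\<^sup>2 * cb * sa * sc + (real n + 1)\<^sup>2 * cc * sa * sb"
    unfolding D_def using pos by (simp add: field_simps power2_eq_square d)
  also have "\<dots> = ca * (sa * cc + ca * sc) * sc - (real n)\<^sup>2 * (ca * cc - sa * sc) * sa * sc
      + (real n + 1)\<^sup>2 * cc * sa * (sa * cc + ca * sc)"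
    by (simp add: sb_def cb_def sin_add cos_add sa_def ca_def sc_def cc_def)
  also have "\<dots> = (ca * sc + (real n + 1) * cc * sa)\<^sup>2 + (real n)\<^sup>2 * sa\<^sup>2 * sc\<^sup>2"
    by (simp add: power2_eq_square algebra_simps)
  also have "\<dots> > 0" using pos d(2) by (simp add: add_nonneg_pos)
  finally have "0 < D * (sa * sb * sc)" .
  moreover have "0 < sa * sb * sc" using pos by simp
  ultimately have "D > 0" by (simp add: zero_less_mult_iff)
  then show ?thesis using deriv by (auto simp: d)
qed

lemma sf_modulus_strict_mono:
  assumes "2 \<le> d" "0 < p" "p \<le> pi"
  shows "strict_mono_on {0<..<p / real d} (sf_modulus d p)"
proof (rule strict_mono_onI)
  define L where "L a = ln (sin a) + real (d - 1) * ln (sin (p - real (d - 1) * a))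
    - real d * ln (sin (p - real d * a))" for a
  have mem: "a \<in> {0<..<p / real d} \<longleftrightarrow> 0 < a \<and> real d * a < p" for a
    using assms(1) by (auto simp: field_simps)
  have exp_L: "sf_modulus d p a = exp (L a)" if "a \<in> {0<..<p / real d}" for a
    using sf_sines_pos[OF assms(1) _ _ assms(3), of a] that mem
    by (simp add: L_def sf_modulus_def exp_diff exp_add exp_of_nat_mult)
  fix a1 a2 assume a: "a1 \<in> {0<..<p / real d}" "a2 \<in> {0<..<p / real d}" "a1 < a2"
  have "L a1 < L a2"
  proof (rule DERIV_pos_imp_increasing[OF a(3)])
    fix x assume x: "a1 \<le> x" "x \<le> a2"
    have "real d * x \<le> real d * a2" using x by (simp add: mult_left_mono)
    then have "0 < x" "real d * x < p" using a x mem by force+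
    then show "\<exists>D. (L has_real_derivative D) (at x) \<and> 0 < D"
      using sf_log_modulus_deriv_pos[OF assms(1) _ _ assms(3)] unfolding L_def[abs_def] by blast
  qed
  then show "sf_modulus d p a1 < sf_modulus d p a2" using exp_L a by simp
qed

lemma sf_modulus_tendsto_0:
  assumes "sin p \<noteq> 0"
  shows "(sf_modulus d p \<longlongrightarrow> 0) (at_right 0)"
proof -
  have "isCont (sf_modulus d p) 0" unfolding sf_modulus_def using assms
    by (intro continuous_intros) auto
  moreover have "sf_modulus d p 0 = 0" by (simp add: sf_modulus_def)
  ultimately show ?thesis by (simp add: isCont_def filterlim_at_split)
qed

lemma sf_modulus_tendsto_at_top:
  assumes "2 \<le> d" "0 < p" "p \<le> pi"
  shows "filterlim (sf_modulus d p) at_top (at_left (p / real d))"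
proof -
  define q where "q = p / real d"
  have q: "0 < q" "real d * q = p" "p - real (d - 1) * q = q"
    using assms by (auto simp: q_def of_nat_diff field_simps)
  have "2 * q \<le> real d * q" using q assms(1) by (intro mult_right_mono) auto
  then have "sin q > 0" using q assms(3) by (intro sin_gt_zero) linarith+
  define G where "G a = sin (p - real d * a) ^ d / (sin a * sin (p - real (d - 1) * a) ^ (d - 1))" for a
  have "isCont G q" unfolding G_def using q \<open>sin q > 0\<close>
    by (intro continuous_intros) auto
  moreover have "G q = 0" using q(2) assms(1) by (simp add: G_def)
  ultimately have "(G \<longlongrightarrow> 0) (at_left q)" by (metis isCont_def filterlim_at_split)
  moreover have "\<forall>\<^sub>F a in at_left q. 0 < G a"
    using eventually_at_left_real[OF q(1)]
  proof eventually_elim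
    case (elim a)
    then have "real d * a < real d * q" using assms(1) by simp
    then show ?case using sf_sines_pos[OF assms(1) _ _ assms(3), of a] elim q(2)
      by (simp add: G_def)
  qed
  ultimately have "filterlim (\<lambda>a. inverse (G a)) at_top (at_left q)"
    by (rule filterlim_inverse_at_top)
  moreover have "inverse (G a) = sf_modulus d p a" for a by (simp add: G_def sf_modulus_def)
  ultimately show ?thesis by (simp add: q_def)
qed

lemma continuous_on_sf_modulus:
  assumes "2 \<le> d" "p \<le> pi"
  shows "continuous_on {0<..<p / real d} (sf_modulus d p)"
proof -
  have "sin (p - real d * a) \<noteq> 0" if "a \<in> {0<..<p / real d}" for a
    using that sf_sines_pos(3)[OF assms(1) _ _ assms(2), of a] assms(1) by (force simp: field_simps)
  then show ?thesis unfolding sf_modulus_def by (intro continuous_intros) auto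
qed

lemma sf_modulus_bij:
  assumes "2 \<le> d" "0 < p" "p < pi"
  shows "bij_betw (sf_modulus d p) {0<..<p / real d} {0<..}"
proof (rule strict_mono_on_bij_betw_greaterThanLessThan)
  show "0 < p / real d" using assms by simp
  show "continuous_on {0<..<p / real d} (sf_modulus d p)"
    using continuous_on_sf_modulus assms by simp
  show "strict_mono_on {0<..<p / real d} (sf_modulus d p)"
    using sf_modulus_strict_mono assms by simp
  have "sin p \<noteq> 0" using assms sin_gt_zero by fastforce
  then show "(sf_modulus d p \<longlongrightarrow> 0) (at_right 0)" by (rule sf_modulus_tendsto_0)
  show "filterlim (sf_modulus d p) at_top (at_left (p / real d))"
    using sf_modulus_tendsto_at_top assms by simp
qed

section \<open>The upper part of the domain\<close>

definition sf_upper :: "nat \<Rightarrow> complex set" where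
  "sf_upper d = {w. 0 < Im w \<and> sf_arg d w < pi}"

lemma sf_arg_pos: "0 < Im w \<Longrightarrow> 0 < sf_arg d w"
  using Arg_lt_pi[of w] Arg_lt_pi[of "w + 1"] by (simp add: sf_arg_def add_pos_nonneg)

lemma sf_map_sf_upper:
  assumes "2 \<le> d" "w \<in> sf_upper d"
  shows "Arg (sf_map d w) = sf_arg d w" "norm (sf_map d w) = sf_modulus d (sf_arg d w) (Arg (w + 1))"
    and "0 < Im (sf_map d w)"
proof -
  define p M where "p = sf_arg d w" and "M = sf_modulus d (sf_arg d w) (Arg (w + 1))"
  have w: "0 < Im w" "p < pi" using assms(2) by (auto simp: sf_upper_def p_def)
  have p: "0 < p" using sf_arg_pos[OF w(1)] by (simp add: p_def)
  have d: "1 \<le> d" using assms(1) by simp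
  note a = sf_point_sf_arg[OF d w(1), folded p_def]
  have M: "0 < M" using sf_modulus_pos[OF assms(1) a(1,2)] w(2) by (simp add: M_def p_def)
  have polar: "sf_map d w = cis p * of_real M"
    using sf_map_polar[OF assms(1) w(1)] w(2) by (simp add: p_def M_def)
  show "Arg (sf_map d w) = sf_arg d w" using p w(2) M by (simp add: polar Arg_cis flip: p_def)
  show "norm (sf_map d w) = sf_modulus d (sf_arg d w) (Arg (w + 1))"
    using M by (simp add: polar norm_mult flip: M_def)
  show "0 < Im (sf_map d w)" using p w(2) M by (simp add: polar sin_gt_zero)
qed

lemma inj_on_sf_map_sf_upper:
  assumes "2 \<le> d"
  shows "inj_on (sf_map d) (sf_upper d)"
proof
  fix w1 w2 assume w: "w1 \<in> sf_upper d" "w2 \<in> sf_upper d" and eq: "sf_map d w1 = sf_map d w2"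
  have d: "1 \<le> d" and d0: "0 < real d" using assms by simp_all
  define p where "p = sf_arg d w1"
  have "p = sf_arg d w2"
    using sf_map_sf_upper(1)[OF assms w(1)] sf_map_sf_upper(1)[OF assms w(2)] eq
    by (simp add: p_def)
  have w_in: "0 < Im w1" "0 < Im w2" "p < pi" using w by (auto simp: sf_upper_def p_def)
  note a1 = sf_point_sf_arg[OF d w_in(1), folded p_def]
    and a2 = sf_point_sf_arg[OF d w_in(2), folded \<open>p = sf_arg d w2\<close>]
  have "inj_on (sf_modulus d p) {0<..<p / real d}"
    using sf_modulus_bij[OF assms _ w_in(3)] sf_arg_pos[OF w_in(1)]
    by (simp add: bij_betw_def p_def)
  moreover have "Arg (w1 + 1) \<in> {0<..<p / real d}" "Arg (w2 + 1) \<in> {0<..<p / real d}"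
    using a1(1,2) a2(1,2) d0 by (auto simp: field_simps)
  moreover have "sf_modulus d p (Arg (w1 + 1)) = sf_modulus d p (Arg (w2 + 1))"
    using sf_map_sf_upper(2)[OF assms w(1)] sf_map_sf_upper(2)[OF assms w(2)] eq \<open>p = sf_arg d w2\<close>
    by (simp add: p_def)
  ultimately have "Arg (w1 + 1) = Arg (w2 + 1)" by (meson inj_onD)
  then show "w1 = w2" using a1(3) a2(3) by metis
qed

lemma mem_image_sf_map_sf_upper:
  assumes "2 \<le> d" "0 < Im z"
  shows "z \<in> sf_map d ` sf_upper d"
proof -
  have d: "1 \<le> d" and d0: "0 < real d" using assms(1) by simp_all
  define p where "p = Arg z"
  have p: "0 < p" "p < pi" using Arg_lt_pi assms(2) by (auto simp: p_def)
  have "norm z \<in> sf_modulus d p ` {0<..<p / real d}"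
    using sf_modulus_bij[OF assms(1) p] assms(2) by (auto simp: bij_betw_def)
  then obtain a where "a \<in> {0<..<p / real d}" and a: "sf_modulus d p a = norm z"
    by (metis imageE)
  then have a': "0 < a" "real d * a < p" using d0 by (auto simp: field_simps)
  note facts = a' less_imp_le[OF p(2)]
  have "sf_point d p a \<in> sf_upper d"
    using sf_point_polar(3)[OF assms(1) facts] sf_arg_sf_point[OF assms(1) facts] p(2)
    by (simp add: sf_upper_def)
  moreover have "sf_map d (sf_point d p a) = z"
  proof -
    have "sin (p - real d * a) \<noteq> 0" using sf_sines_pos(3)[OF assms(1) facts] by simp
    then have "sf_map d (sf_point d p a) = cis p * of_real (norm z)"
      using sf_map_sf_point[OF d] a by simp
    also have "\<dots> = z" using rcis_cmod_Arg[of z] by (simp add: rcis_def p_def mult.commute)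
    finally show ?thesis .
  qed
  ultimately show ?thesis by (metis image_eqI)
qed

lemma sf_upper_bij:
  assumes "2 \<le> d"
  shows "bij_betw (sf_map d) (sf_upper d) {z. 0 < Im z}"
  unfolding bij_betw_def
  using inj_on_sf_map_sf_upper[OF assms] mem_image_sf_map_sf_upper[OF assms] sf_map_sf_upper(3)[OF assms]
  by blast

lemma sf_arg_add_of_real_less:
  assumes "0 < Im z" "0 < c"
  shows "sf_arg d (z + of_real c) < sf_arg d z"
proof -
  have "Arg (z + 1 + of_real c) < Arg (z + 1)" using Arg_add_of_real_less[of "z + 1" c] assms
    by simp
  then have "real (d - 1) * Arg (z + of_real c + 1) \<le> real (d - 1) * Arg (z + 1)"
    by (intro mult_left_mono) (auto simp: algebra_simps)
  then show ?thesis using Arg_add_of_real_less[OF assms] by (simp add: sf_arg_def)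
qed

lemma sf_arg_le_if_Re_le:
  assumes "0 < Im z" "Im w = Im z" "Re z \<le> Re w"
  shows "sf_arg d w \<le> sf_arg d z"
proof (cases "Re z = Re w")
  case True
  then have "w = z" using assms(2) by (simp add: complex_eq_iff)
  then show ?thesis by simp
next
  case False
  then have "w = z + of_real (Re w - Re z)" using assms(2) by (simp add: complex_eq_iff)
  moreover have "0 < Re w - Re z" using False assms(3) by simp
  ultimately show ?thesis using sf_arg_add_of_real_less[OF assms(1), of "Re w - Re z" d] by simp
qed

lemma sf_arg_left_edge:
  assumes "2 \<le> d" "0 < y"
  shows "pi \<le> sf_arg d (Complex (- 1 / real d) y)"
proof -
  have d0: "real d > 0" "1 - 1 / real d > 0" using assms(1) by auto
  have A1: "Arg (Complex (- 1 / real d) y) = pi - arctan (real d * y)"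
    using Arg_eq_pi_minus_arctan[of "Complex (- 1 / real d) y"] assms(2) d0
    by (simp add: mult.commute)
  have "Complex (- 1 / real d) y + 1 = Complex (1 - 1 / real d) y" by (simp add: complex_eq_iff)
  then have A2: "Arg (Complex (- 1 / real d) y + 1) = arctan (y / (1 - 1 / real d))"
    using arg_conv_arctan[of "Complex (1 - 1 / real d) y"] d0 by simp
  have "real (d - 1) * (y / (1 - 1 / real d)) = real d * y"
    using d0 assms(1) by (simp add: of_nat_diff field_simps)
  then have "arctan (real d * y) \<le> real (d - 1) * arctan (y / (1 - 1 / real d))"
    using arctan_of_nat_mult_le[of "y / (1 - 1 / real d)" "d - 1"] assms(2) d0 by simp
  then show ?thesis unfolding sf_arg_def A1 A2 by simp
qed

lemma sf_upper_Re_gt: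
  assumes "2 \<le> d" "w \<in> sf_upper d"
  shows "- 1 / real d < Re w"
proof (rule ccontr)
  assume "\<not> - 1 / real d < Re w"
  moreover have w: "0 < Im w" "sf_arg d w < pi" using assms(2) by (auto simp: sf_upper_def)
  ultimately have "sf_arg d (Complex (- 1 / real d) (Im w)) \<le> sf_arg d w"
    by (intro sf_arg_le_if_Re_le) auto
  then show False using sf_arg_left_edge[OF assms(1) w(1)] w(2) by simp
qed

text \<open>The bounds arctan u \<le> u and v / (1 + v^2) \<le> arctan v reduce sf_arg < pi to a polynomial
  inequality.\<close>
lemma sf_arg_Complex_less_pi:
  assumes "0 < s" "s < 1" "0 < y" "real (d - 1) * (s\<^sup>2 + y\<^sup>2) < s * (1 - s)"
  shows "sf_arg d (Complex (- s) y) < pi"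
proof -
  define n where "n = real (d - 1)"
  have n: "0 \<le> n" by (simp add: n_def)
  have A1: "Arg (Complex (- s) y) = pi - arctan (y / s)"
    using Arg_eq_pi_minus_arctan[of "Complex (- s) y"] assms(1,3) by simp
  have "Complex (- s) y + 1 = Complex (1 - s) y" by (simp add: complex_eq_iff)
  then have A2: "Arg (Complex (- s) y + 1) = arctan (y / (1 - s))"
    using arg_conv_arctan[of "Complex (1 - s) y"] assms(2) by simp
  have pos: "s\<^sup>2 + y\<^sup>2 > 0" "1 - s > 0" using assms(1,2) by (auto simp: add_pos_nonneg)
  have "n * arctan (y / (1 - s)) \<le> n * (y / (1 - s))"
    using assms(2,3) n by (intro mult_left_mono arctan_le_self) auto
  also have "n * (y / (1 - s)) < y * s / (s\<^sup>2 + y\<^sup>2)"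
  proof -
    have "y * (n * (s\<^sup>2 + y\<^sup>2)) < y * (s * (1 - s))"
      using assms(3,4) by (intro mult_strict_left_mono) (auto simp: n_def)
    then show ?thesis using pos by (simp add: field_simps)
  qed
  also have "y * s / (s\<^sup>2 + y\<^sup>2) = (y / s) / (1 + (y / s)\<^sup>2)"
    using assms(1) by (simp add: field_simps power2_eq_square)
  also have "\<dots> \<le> arctan (y / s)" using assms(1,3)
    by (intro divide_one_plus_square_le_arctan) auto
  finally have "n * arctan (y / (1 - s)) < arctan (y / s)" .
  then show ?thesis unfolding sf_arg_def A1 A2 n_def by simp
qed

lemma sf_arg_less_pi_near_real:
  assumes "2 \<le> d" "- 1 / real d < x" "x < 0"
  shows "\<exists>e>0. \<forall>y. 0 < y \<and> y < e \<longrightarrow> sf_arg d (Complex x y) < pi"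
proof -
  define s n where "s = - x" and "n = real (d - 1)"
  have n: "n \<ge> 1" "real d = n + 1" using assms(1) by (auto simp: n_def of_nat_diff)
  have s: "0 < s" "real d * s < 1" using assms by (auto simp: s_def field_simps)
  have "1 * s \<le> real d * s" using s(1) assms(1) by (intro mult_right_mono) auto
  then have s1: "s < 1" using s(2) by linarith
  define K where "K = s * (1 - real d * s)"
  have K: "K > 0" using s by (simp add: K_def)
  define e where "e = min 1 (K / n)"
  have "sf_arg d (Complex x y) < pi" if y: "0 < y" "y < e" for y
  proof -
    have "y\<^sup>2 \<le> y" using y by (simp add: power2_eq_square e_def mult_le_cancel_right1)
    then have "n * y\<^sup>2 \<le> n * y" using n by (intro mult_left_mono) auto
    also have "n * y < n * (K / n)" using y n by (intro mult_strict_left_mono) (auto simp: e_def)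
    also have "\<dots> = K" using n by simp
    finally have "n * (s\<^sup>2 + y\<^sup>2) < s * (1 - s)"
      using n by (simp add: K_def algebra_simps power2_eq_square)
    then show ?thesis using sf_arg_Complex_less_pi[OF s(1) s1 y(1)] by (simp add: s_def n_def)
  qed
  moreover have "e > 0" using K n by (simp add: e_def)
  ultimately show ?thesis by blast
qed

section \<open>The domain\<close>

lemma sf_map_of_real: "sf_map d (of_real x) = of_real (x * (x + 1) ^ (d - 1))"
  by (simp add: sf_map_def)

lemma r_sf_pow:
  assumes "2 \<le> d"
  shows "r_sf d ^ d = 1 / real d * (1 - 1 / real d) ^ (d - 1)"
proof -
  have d0: "real d > 0" "1 - 1 / real d > 0" using assms by auto
  have "(real d powr (- 1 / real d)) ^ d = real d powr (real d * (- 1 / real d))"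
    using d0 by (simp add: powr_power)
  also have "\<dots> = 1 / real d" using d0 by (simp add: powr_minus_divide)
  finally have A: "(real d powr (- 1 / real d)) ^ d = 1 / real d" .
  have "((1 - 1 / real d) powr (1 - 1 / real d)) ^ d = (1 - 1 / real d) powr (real d * (1 - 1 / real d))"
    using d0 by (simp add: powr_power)
  also have "real d * (1 - 1 / real d) = real (d - 1)" using d0 assms
    by (simp add: of_nat_diff field_simps)
  also have "(1 - 1 / real d) powr real (d - 1) = (1 - 1 / real d) ^ (d - 1)"
    by (metis powr_realpow d0(2))
  finally have B: "((1 - 1 / real d) powr (1 - 1 / real d)) ^ d = (1 - 1 / real d) ^ (d - 1)" .
  show ?thesis unfolding r_sf_def power_mult_distrib A B ..
qed

lemma r_sf_pos: "2 \<le> d \<Longrightarrow> 0 < r_sf d"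
  by (simp add: r_sf_def)

lemma sf_real_at_neg_inv:
  assumes "2 \<le> d"
  shows "(- 1 / real d) * (- 1 / real d + 1) ^ (d - 1) = - (r_sf d ^ d)"
  using r_sf_pow[OF assms] by simp

lemma sf_real_deriv_pos:
  assumes "2 \<le> d" "- 1 / real d < x"
  shows "\<exists>D>0. ((\<lambda>x::real. x * (x + 1) ^ (d - 1)) has_real_derivative D) (at x)"
proof -
  obtain n where d: "d = Suc n" "1 \<le> n" using assms(1) by (cases d) auto
  have "((\<lambda>x::real. x * (x + 1) ^ (d - 1)) has_real_derivative (x + 1) ^ n + x * (real n * (x + 1) ^ (n - 1))) (at x)"
    unfolding d by (auto intro!: derivative_eq_intros)
  moreover have "(x + 1) ^ n + x * (real n * (x + 1) ^ (n - 1)) = (x + 1) ^ (n - 1) * (real d * x + 1)"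
  proof -
    have "(x + 1) ^ n = (x + 1) ^ (n - 1) * (x + 1)" using d(2)
      by (metis Suc_diff_le diff_Suc_1 power_Suc2)
    then show ?thesis by (simp add: d algebra_simps)
  qed
  moreover have "0 < (x + 1) ^ (n - 1) * (real d * x + 1)"
  proof -
    have "- 1 / real d \<ge> - 1 / 2" using assms(1) by (simp add: field_simps)
    then have "0 < x + 1" using assms(2) by linarith
    moreover have "0 < real d * x + 1" using assms by (simp add: field_simps)
    ultimately show ?thesis by simp
  qed
  ultimately show ?thesis by metis
qed

lemma sf_real_bij:
  assumes "2 \<le> d"
  shows "bij_betw (\<lambda>x::real. x * (x + 1) ^ (d - 1)) {- 1 / real d<..} {- (r_sf d ^ d)<..}"
proof -
  let ?f = "\<lambda>x::real. x * (x + 1) ^ (d - 1)"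
  have cont: "continuous_on {- 1 / real d..} ?f" by (intro continuous_intros)
  have "strict_mono_on {- 1 / real d<..} ?f"
  proof (rule strict_mono_onI)
    fix r s assume rs: "r \<in> {- 1 / real d<..}" "s \<in> {- 1 / real d<..}" "r < s"
    show "?f r < ?f s"
    proof (rule DERIV_pos_imp_increasing[OF rs(3)])
      fix x assume "r \<le> x" "x \<le> s"
      then have "- 1 / real d < x" using rs(1) by simp
      then show "\<exists>D. (?f has_real_derivative D) (at x) \<and> 0 < D"
        using sf_real_deriv_pos[OF assms] by blast
    qed
  qed
  then have mono: "strict_mono_on {- 1 / real d..} ?f"
    by (rule strict_mono_on_atLeast_if_continuous[OF cont])
  have "filterlim ?f at_top at_top"
  proof (rule filterlim_at_top_mono[OF filterlim_ident])
    show "\<forall>\<^sub>F x in at_top. x \<le> ?f x"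
      using eventually_ge_at_top[of 0]
    proof eventually_elim
      case (elim x)
      have "x * 1 \<le> x * (x + 1) ^ (d - 1)" using elim
        by (intro mult_left_mono one_le_power) auto
      then show ?case by simp
    qed
  qed
  then show ?thesis
    using strict_mono_on_bij_betw_greaterThan[OF cont mono] sf_real_at_neg_inv[OF assms] by simp
qed

definition sf_domain :: "nat \<Rightarrow> complex set" where
  "sf_domain d = sf_upper d \<union> cnj ` sf_upper d \<union> of_real ` {- 1 / real d<..}"

lemma mem_sf_domain_iff:
  "w \<in> sf_domain d \<longleftrightarrow> (0 < Im w \<and> sf_arg d w < pi) \<or> (Im w < 0 \<and> sf_arg d (cnj w) < pi)
     \<or> (Im w = 0 \<and> - 1 / real d < Re w)"
  by (auto simp: sf_domain_def sf_upper_def mem_cnj_image_iff mem_of_real_image_iff)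

lemma cnj_mem_sf_domain_iff: "cnj w \<in> sf_domain d \<longleftrightarrow> w \<in> sf_domain d"
  unfolding mem_sf_domain_iff by auto

lemma sf_domain_Re_gt:
  assumes "2 \<le> d" "w \<in> sf_domain d"
  shows "- 1 / real d < Re w"
  using assms sf_upper_Re_gt[OF assms(1), of w] sf_upper_Re_gt[OF assms(1), of "cnj w"]
  unfolding mem_sf_domain_iff sf_upper_def by auto

lemma continuous_on_sf_arg: "continuous_on {w. 0 < Im w} (sf_arg d)"
  unfolding sf_arg_def[abs_def] by (intro continuous_intros) (auto simp: complex_nonpos_Reals_iff)

lemma open_sf_arg_vimage:
  assumes "open U"
  shows "open {w. 0 < Im w \<and> sf_arg d w \<in> U}"
proof -
  have "open ({w. 0 < Im w} \<inter> sf_arg d -` U)"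
    using continuous_on_sf_arg assms by (intro continuous_open_preimage open_halfspace_Im_gt)
  moreover have "{w. 0 < Im w} \<inter> sf_arg d -` U = {w. 0 < Im w \<and> sf_arg d w \<in> U}"
    by auto
  ultimately show ?thesis by simp
qed

lemma open_sf_upper: "open (sf_upper d)"
  using open_sf_arg_vimage[of "{..<pi}" d] by (simp add: sf_upper_def)

lemma ball_of_real_subset_sf_domain:
  assumes "2 \<le> d" "- 1 / real d < x"
  shows "\<exists>r>0. ball (of_real x) r \<subseteq> sf_domain d"
proof -
  have "- 1 / real d < min x 0" using assms by simp
  then obtain x1 where "- 1 / real d < x1" "x1 < min x 0" using dense by blast
  then have x1: "- 1 / real d < x1" "x1 < 0" "x1 < x" by simp_all
  obtain e where e: "e > 0" "\<And>y. 0 < y \<Longrightarrow> y < e \<Longrightarrow> sf_arg d (Complex x1 y) < pi"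
    using sf_arg_less_pi_near_real[OF assms(1) x1(1,2)] by blast
  have upper: "v \<in> sf_upper d" if "0 < Im v" "Im v < e" "x1 \<le> Re v" for v
  proof -
    have "sf_arg d v \<le> sf_arg d (Complex x1 (Im v))" using that
      by (intro sf_arg_le_if_Re_le) auto
    then show ?thesis using e(2)[of "Im v"] that by (simp add: sf_upper_def)
  qed
  define r where "r = min e (x - x1)"
  have "ball (of_real x) r \<subseteq> sf_domain d"
  proof
    fix v :: complex assume "v \<in> ball (of_real x) r"
    then have "cmod (of_real x - v) < r" by (simp add: dist_norm)
    then have "\<bar>x - Re v\<bar> < r" "\<bar>Im v\<bar> < r"
      using abs_Re_le_cmod[of "of_real x - v"] abs_Im_le_cmod[of "of_real x - v"] by auto
    then have v: "x1 \<le> Re v" "\<bar>Im v\<bar> < e" by (auto simp: r_def)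
    consider "0 < Im v" | "Im v < 0" | "Im v = 0" by linarith
    then show "v \<in> sf_domain d"
    proof cases
      case 1
      then show ?thesis using upper[of v] v by (simp add: sf_domain_def)
    next
      case 2
      then show ?thesis using upper[of "cnj v"] v by (simp add: sf_domain_def mem_cnj_image_iff)
    next
      case 3
      then show ?thesis using v x1 by (simp add: mem_sf_domain_iff)
    qed
  qed
  moreover have "r > 0" using e x1 by (simp add: r_def)
  ultimately show ?thesis by blast
qed

lemma open_sf_domain:
  assumes "2 \<le> d"
  shows "open (sf_domain d)"
  unfolding open_contains_ball
proof
  fix w assume "w \<in> sf_domain d"
  then consider "w \<in> sf_upper d \<union> cnj ` sf_upper d" | x where "- 1 / real d < x" "w = of_real x"
    unfolding sf_domain_def by blast
  then show "\<exists>r>0. ball w r \<subseteq> sf_domain d"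
  proof cases
    case 1
    moreover have "open (sf_upper d \<union> cnj ` sf_upper d)"
      using open_sf_upper open_cnj_image by blast
    ultimately obtain r where "r > 0" "ball w r \<subseteq> sf_upper d \<union> cnj ` sf_upper d"
      using open_contains_ball by blast
    then show ?thesis unfolding sf_domain_def by blast
  next
    case 2
    then show ?thesis using ball_of_real_subset_sf_domain[OF assms] by blast
  qed
qed

lemma sf_map_cnj: "sf_map d (cnj w) = cnj (sf_map d w)"
  by (simp add: sf_map_def)

lemma sf_domain_bij:
  assumes "2 \<le> d"
  shows "bij_betw (sf_map d) (sf_domain d) (UNIV - of_real ` {.. - (r_sf d ^ d)})"
proof -
  note upper = sf_upper_bij[OF assms]
  have "bij_betw (cnj \<circ> sf_map d \<circ> cnj) (cnj ` sf_upper d) (cnj ` {z. 0 < Im z})"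
    using bij_betw_cnj_image[of "cnj ` sf_upper d"] upper bij_betw_cnj_image[of "{z. 0 < Im z}"]
    by (auto simp: image_image intro: bij_betw_trans)
  moreover have "cnj \<circ> sf_map d \<circ> cnj = sf_map d" by (auto simp: sf_map_cnj)
  moreover have "cnj ` {z. 0 < Im z} = {z. Im z < 0}" by (auto simp: mem_cnj_image_iff)
  ultimately have lower: "bij_betw (sf_map d) (cnj ` sf_upper d) {z. Im z < 0}" by simp
  have "bij_betw (complex_of_real \<circ> (\<lambda>x. x * (x + 1) ^ (d - 1))) {- 1 / real d<..}
      (of_real ` {- (r_sf d ^ d)<..})"
    by (rule bij_betw_trans[OF sf_real_bij[OF assms] bij_betw_of_real_image])
  moreover have "complex_of_real \<circ> (\<lambda>x. x * (x + 1) ^ (d - 1)) = sf_map d \<circ> of_real"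
    by (auto simp: sf_map_of_real)
  ultimately have real: "bij_betw (sf_map d) (of_real ` {- 1 / real d<..}) (of_real ` {- (r_sf d ^ d)<..})"
    unfolding bij_betw_comp_iff[OF bij_betw_of_real_image] by metis
  have "bij_betw (sf_map d) (sf_domain d) ({z. 0 < Im z} \<union> {z. Im z < 0} \<union> of_real ` {- (r_sf d ^ d)<..})"
    unfolding sf_domain_def
    by (intro bij_betw_combine[OF bij_betw_combine[OF upper lower] real]) (auto simp: mem_of_real_image_iff)
  moreover have "{z. 0 < Im z} \<union> {z. Im z < 0} \<union> of_real ` {- (r_sf d ^ d)<..} = UNIV - of_real ` {.. - (r_sf d ^ d)}"
    by (auto simp: mem_of_real_image_iff)
  ultimately show ?thesis by simp
qed

lemma simply_connected_sf_domain:
  assumes "2 \<le> d"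
  shows "simply_connected (sf_domain d)"
proof -
  note bij = sf_domain_bij[OF assms]
  have "continuous_on (sf_domain d) (sf_map d)" unfolding sf_map_def[abs_def]
    by (intro continuous_intros)
  then have "sf_domain d homeomorphic sf_map d ` sf_domain d"
    using open_sf_domain[OF assms] bij
    by (intro invariance_of_domain_homeomorphic) (auto simp: bij_betw_def)
  then have hom: "sf_domain d homeomorphic (UNIV - complex_of_real ` {.. - (r_sf d ^ d)})"
    using bij by (simp add: bij_betw_def)
  have "simply_connected (UNIV - complex_of_real ` {.. - (r_sf d ^ d)})"
    using r_sf_pos[OF assms] by (intro starlike_imp_simply_connected starlike_slit_plane) simp
  then show ?thesis using homeomorphic_simply_connected_eq[OF hom] by simp
qed

section \<open>The boundary curve\<close>

definition curve_angle :: "nat \<Rightarrow> real \<Rightarrow> real" where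
  "curve_angle d t = pi * t / (real d * (1 + t))"

text \<open>This is sf_point d pi (curve_angle d t), written with sinc so that it extends continuously
  to t = 0.\<close>
definition sf_curve :: "nat \<Rightarrow> real \<Rightarrow> complex" where
  "sf_curve d t = cis (pi - real (d - 1) * curve_angle d t) *
     of_real (sinc (curve_angle d t) / (real d * sinc (real d * curve_angle d t)))"

lemma curve_angle_bounds:
  assumes "2 \<le> d" "0 \<le> t"
  shows "0 \<le> curve_angle d t" "real d * curve_angle d t < pi" "0 < t \<Longrightarrow> 0 < curve_angle d t"
proof -
  have d: "0 < real d" using assms(1) by simp
  show "0 \<le> curve_angle d t" "0 < t \<Longrightarrow> 0 < curve_angle d t"
    using assms(2) d by (simp_all add: curve_angle_def)
  have "real d * curve_angle d t = pi * (t / (1 + t))" using d by (simp add: curve_angle_def)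
  also have "\<dots> < pi * 1" using assms(2) by (intro mult_strict_left_mono) auto
  finally show "real d * curve_angle d t < pi" by simp
qed

lemma curve_angle_strict_mono:
  assumes "2 \<le> d"
  shows "strict_mono_on {0..} (curve_angle d)"
proof (rule strict_mono_onI)
  fix s t :: real assume "s \<in> {0..}" "t \<in> {0..}" "s < t"
  then have "s / (1 + s) < t / (1 + t)" by (simp add: field_simps)
  then have "pi / real d * (s / (1 + s)) < pi / real d * (t / (1 + t))"
    using assms by (intro mult_strict_left_mono) auto
  then show "curve_angle d s < curve_angle d t" by (simp add: curve_angle_def field_simps)
qed

lemma curve_angle_surj:
  assumes "2 \<le> d" "0 < a" "real d * a < pi"
  shows "\<exists>t>0. curve_angle d t = a"
proof (intro exI conjI)
  have "0 < real d" "0 < pi - real d * a" using assms by simp_all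
  then show "0 < real d * a / (pi - real d * a)" "curve_angle d (real d * a / (pi - real d * a)) = a"
    using assms(2) by (simp_all add: curve_angle_def field_simps)
qed

lemma sf_curve_eq_sf_point:
  assumes "2 \<le> d" "0 < t"
  shows "sf_curve d t = sf_point d pi (curve_angle d t)"
proof -
  define a where "a = curve_angle d t"
  have "0 < a" using curve_angle_bounds[OF assms(1)] assms(2) by (simp add: a_def)
  moreover have "0 < real d" using assms(1) by simp
  ultimately show ?thesis unfolding sf_curve_def sf_point_def a_def[symmetric]
    by (simp add: field_simps)
qed

lemma sf_curve_0: "sf_curve d 0 = of_real (- 1 / real d)"
  by (simp add: sf_curve_def curve_angle_def)

lemma continuous_on_sf_curve:
  assumes "2 \<le> d"
  shows "continuous_on {0..} (sf_curve d)"
proof -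
  have "continuous_on {0..} (curve_angle d)"
    unfolding curve_angle_def[abs_def] using assms
    by (intro continuous_intros) (auto simp: add_pos_nonneg)
  moreover have "sinc (real d * curve_angle d t) \<noteq> 0" if "0 \<le> t" for t
    using curve_angle_bounds[OF assms that] by (auto simp: sin_gt_zero less_imp_neq[symmetric])
  ultimately show ?thesis
    unfolding sf_curve_def[abs_def] using assms by (intro continuous_intros) auto
qed

lemma sf_curve_upper:
  assumes "2 \<le> d" "0 < t"
  shows "0 < Im (sf_curve d t)" "sf_arg d (sf_curve d t) = pi"
proof -
  have a: "0 < curve_angle d t" "real d * curve_angle d t < pi"
    using curve_angle_bounds[OF assms(1) less_imp_le[OF assms(2)]] assms(2) by auto
  then show "0 < Im (sf_curve d t)" "sf_arg d (sf_curve d t) = pi"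
    using sf_point_polar(3)[OF assms(1) a order_refl] sf_arg_sf_point[OF assms(1) a order_refl]
    by (simp_all add: sf_curve_eq_sf_point[OF assms])
qed

lemma sf_map_sf_curve_eq_modulus:
  assumes "2 \<le> d" "0 < t"
  shows "sf_map d (sf_curve d t) = - of_real (sf_modulus d pi (curve_angle d t))"
proof -
  have a: "0 < curve_angle d t" "real d * curve_angle d t < pi"
    using curve_angle_bounds[OF assms(1) less_imp_le[OF assms(2)]] assms(2) by auto
  then have "sin (pi - real d * curve_angle d t) \<noteq> 0"
    using sf_sines_pos(3)[OF assms(1) a order_refl] by simp
  then show ?thesis
    using sf_map_sf_point[of d pi "curve_angle d t"] assms(1)
    by (simp add: sf_curve_eq_sf_point[OF assms])
qed

lemma mem_sf_curve_iff:
  assumes "2 \<le> d"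
  shows "w \<in> sf_curve d ` {0..} \<longleftrightarrow> w = of_real (- 1 / real d) \<or> (0 < Im w \<and> sf_arg d w = pi)"
proof
  assume "w \<in> sf_curve d ` {0..}"
  then obtain t where "0 \<le> t" "w = sf_curve d t" by auto
  then show "w = of_real (- 1 / real d) \<or> (0 < Im w \<and> sf_arg d w = pi)"
    using sf_curve_0 sf_curve_upper[OF assms, of t] by (cases "t = 0") auto
next
  assume "w = of_real (- 1 / real d) \<or> (0 < Im w \<and> sf_arg d w = pi)"
  then show "w \<in> sf_curve d ` {0..}"
  proof
    assume "w = of_real (- 1 / real d)"
    then show ?thesis using sf_curve_0[of d] by (metis atLeast_iff image_eqI order_refl)
  next
    assume w: "0 < Im w \<and> sf_arg d w = pi"
    have d: "1 \<le> d" using assms by simp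
    note a = sf_point_sf_arg[OF d conjunct1[OF w]]
    obtain t where "0 < t" "curve_angle d t = Arg (w + 1)"
      using curve_angle_surj[OF assms a(1)] a(2) w by auto
    then have "sf_curve d t = w" using sf_curve_eq_sf_point[OF assms] a(3) w by simp
    then show ?thesis using \<open>0 < t\<close> by force
  qed
qed

lemma norm_sf_curve_ge:
  assumes "2 \<le> d" "1 \<le> t"
  shows "sin (pi / (2 * real d)) * (1 + t) / pi \<le> norm (sf_curve d t)"
proof -
  have d0: "real d > 0" using assms(1) by simp
  have t0: "0 < t" using assms(2) by simp
  define a where "a = curve_angle d t"
  have a: "0 < a" "real d * a < pi" using curve_angle_bounds[OF assms(1)] t0 by (auto simp: a_def)
  have ea: "real d * a = pi * (t / (1 + t))" using d0 by (simp add: a_def curve_angle_def)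
  then have pa: "pi - real d * a = pi / (1 + t)" using t0 by (simp add: field_simps)
  have a2: "pi / (2 * real d) \<le> a"
  proof -
    have "1 / 2 \<le> t / (1 + t)" using assms(2) by (simp add: field_simps)
    then have "pi * (1 / 2) \<le> real d * a" unfolding ea by (intro mult_left_mono) auto
    then show ?thesis using d0 by (simp add: field_simps)
  qed
  have a3: "a \<le> pi / 2"
  proof -
    have "2 * a \<le> real d * a" using assms(1) a by (intro mult_right_mono) auto
    then show ?thesis using a(2) by linarith
  qed
  have "0 \<le> pi / (2 * real d)" using d0 by simp
  then have s1: "sin (pi / (2 * real d)) \<le> sin a"
    using a2 a3 by (intro sin_monotone_2pi_le) linarith+
  have sp: "0 \<le> sin (pi / (2 * real d))" using d0
    by (intro sin_ge_zero) (auto simp: field_simps)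
  have sc: "0 < sin (pi - real d * a)" using sf_sines_pos(3)[OF assms(1) a order_refl] .
  have s2: "sin (pi - real d * a) \<le> pi / (1 + t)" using sin_x_le_x[of "pi - real d * a"] a pa
    by simp
  have "sin (pi / (2 * real d)) * (1 + t) / pi = sin (pi / (2 * real d)) / (pi / (1 + t))"
    using t0 by (simp add: field_simps)
  also have "\<dots> \<le> sin a / (pi / (1 + t))" using s1 t0 by (intro divide_right_mono) auto
  also have "\<dots> \<le> sin a / sin (pi - real d * a)"
    using s2 sc s1 sp t0 by (intro divide_left_mono) (auto intro!: mult_pos_pos divide_pos_pos)
  also have "\<dots> = norm (sf_curve d t)"
    using sf_curve_eq_sf_point[OF assms(1) t0] sc sin_gt_zero[of a] a a3
    by (simp add: sf_point_def a_def norm_mult norm_divide)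
  finally show ?thesis .
qed

lemma filterlim_norm_sf_curve:
  assumes "2 \<le> d"
  shows "filterlim (\<lambda>t. norm (sf_curve d t)) at_top at_top"
proof (rule filterlim_at_top_mono)
  define K where "K = sin (pi / (2 * real d)) / pi"
  have "0 < K" unfolding K_def using assms
    by (intro divide_pos_pos sin_gt_zero) (auto simp: field_simps)
  then show "filterlim (\<lambda>t. K * (1 + t)) at_top at_top"
    by (intro filterlim_tendsto_pos_mult_at_top[OF tendsto_const]
        filterlim_tendsto_add_at_top[OF tendsto_const] filterlim_ident)
  show "\<forall>\<^sub>F t in at_top. K * (1 + t) \<le> norm (sf_curve d t)"
    using eventually_ge_at_top[of 1]
    by eventually_elim (use norm_sf_curve_ge[OF assms] in \<open>simp add: K_def\<close>)
qed

lemma norm_le_norm_sf_map: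
  assumes "2 \<le> norm w"
  shows "norm w \<le> norm (sf_map d w)"
proof -
  have "norm w - norm (1::complex) \<le> norm (w + 1)" by (rule norm_diff_ineq)
  then have "1 \<le> norm (w + 1) ^ (d - 1)" using assms by (intro one_le_power) simp
  then have "norm w * 1 \<le> norm w * norm (w + 1) ^ (d - 1)" by (intro mult_left_mono) auto
  then show ?thesis by (simp add: sf_map_def norm_mult norm_power)
qed

lemma sf_map_sf_curve_0:
  assumes "2 \<le> d"
  shows "sf_map d (sf_curve d 0) = - of_real (r_sf d ^ d)"
proof -
  have "sf_map d (sf_curve d 0) = of_real ((- 1 / real d) * (- 1 / real d + 1) ^ (d - 1))"
    by (simp only: sf_curve_0 sf_map_of_real)
  then show ?thesis by (simp only: sf_real_at_neg_inv[OF assms] of_real_minus)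
qed

lemma sf_map_sf_curve_eq_neg_norm:
  assumes "2 \<le> d" "0 \<le> t"
  shows "sf_map d (sf_curve d t) = - of_real (norm (sf_map d (sf_curve d t)))"
proof (cases "t = 0")
  case True
  then show ?thesis using sf_map_sf_curve_0[OF assms(1)] r_sf_pos[OF assms(1)]
    by (simp add: norm_power)
next
  case False
  then have t: "0 < t" using assms(2) by simp
  have a: "0 < curve_angle d t" "real d * curve_angle d t < pi"
    using curve_angle_bounds[OF assms] t by auto
  then show ?thesis
    using sf_map_sf_curve_eq_modulus[OF assms(1) t] sf_modulus_pos[OF assms(1) a order_refl] by simp
qed

lemma continuous_on_sf_map_sf_curve:
  assumes "2 \<le> d"
  shows "continuous_on {0..} (\<lambda>t. sf_map d (sf_curve d t))"
proof -
  have "continuous_on UNIV (sf_map d)" unfolding sf_map_def[abs_def] by (intro continuous_intros)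
  then show ?thesis by (rule continuous_on_compose2[OF _ continuous_on_sf_curve[OF assms]]) auto
qed

lemma norm_sf_map_sf_curve_strict_mono:
  assumes "2 \<le> d"
  shows "strict_mono_on {0..} (\<lambda>t. norm (sf_map d (sf_curve d t)))"
proof (rule strict_mono_on_atLeast_if_continuous)
  show "continuous_on {0..} (\<lambda>t. norm (sf_map d (sf_curve d t)))"
    by (intro continuous_on_norm continuous_on_sf_map_sf_curve[OF assms])
  show "strict_mono_on {0<..} (\<lambda>t. norm (sf_map d (sf_curve d t)))"
  proof (rule strict_mono_onI)
    fix s t :: real assume st: "s \<in> {0<..}" "t \<in> {0<..}" "s < t"
    have "curve_angle d s < curve_angle d t"
      using strict_mono_onD[OF curve_angle_strict_mono[OF assms]] st by simp
    moreover have "curve_angle d s \<in> {0<..<pi / real d}" "curve_angle d t \<in> {0<..<pi / real d}"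
      using curve_angle_bounds[OF assms, of s] curve_angle_bounds[OF assms, of t] st assms
      by (auto simp: field_simps)
    ultimately have "sf_modulus d pi (curve_angle d s) < sf_modulus d pi (curve_angle d t)"
      using strict_mono_onD[OF sf_modulus_strict_mono[OF assms pi_gt_zero order_refl]] by blast
    moreover have "0 < sf_modulus d pi (curve_angle d s)"
      using \<open>curve_angle d s \<in> _\<close> sf_modulus_pos[OF assms _ _ order_refl] assms
      by (auto simp: field_simps)
    ultimately show "norm (sf_map d (sf_curve d s)) < norm (sf_map d (sf_curve d t))"
      using sf_map_sf_curve_eq_modulus[OF assms] st by simp
  qed
qed

lemma sf_curve_bij:
  assumes "2 \<le> d"
  shows "bij_betw (sf_map d) (sf_curve d ` {0..}) (of_real ` {.. - (r_sf d ^ d)})"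
proof -
  define h where "h t = norm (sf_map d (sf_curve d t))" for t
  have "filterlim h at_top at_top"
  proof (rule filterlim_at_top_mono[OF filterlim_norm_sf_curve[OF assms]])
    show "\<forall>\<^sub>F t in at_top. norm (sf_curve d t) \<le> h t"
      using filterlim_norm_sf_curve[OF assms, unfolded filterlim_at_top, rule_format, of 2]
      by eventually_elim (simp add: h_def norm_le_norm_sf_map)
  qed
  then have "bij_betw h {0..} {h 0..}"
    using continuous_on_sf_map_sf_curve[OF assms] norm_sf_map_sf_curve_strict_mono[OF assms]
    unfolding h_def[abs_def] by (intro strict_mono_on_bij_betw_atLeast continuous_on_norm)
  moreover have "h 0 = r_sf d ^ d"
    using sf_map_sf_curve_0[OF assms] r_sf_pos[OF assms] by (simp add: h_def norm_power)
  moreover have "bij_betw (\<lambda>x. - complex_of_real x) {r_sf d ^ d..} (of_real ` {.. - (r_sf d ^ d)})"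
  proof (rule bij_betwI')
    fix y assume "y \<in> complex_of_real ` {.. - (r_sf d ^ d)}"
    then obtain x where "x \<le> - (r_sf d ^ d)" "y = of_real x" by auto
    then show "\<exists>x\<in>{r_sf d ^ d..}. y = - complex_of_real x"
      by (intro bexI[of _ "- x"]) auto
  qed auto
  ultimately have "bij_betw ((\<lambda>x. - complex_of_real x) \<circ> h) {0..} (of_real ` {.. - (r_sf d ^ d)})"
    by (auto intro: bij_betw_trans)
  moreover have "((\<lambda>x. - complex_of_real x) \<circ> h) t = (sf_map d \<circ> sf_curve d) t" if "t \<in> {0..}" for t
    using sf_map_sf_curve_eq_neg_norm[OF assms, of t] that by (simp add: h_def)
  ultimately have bij: "bij_betw (sf_map d \<circ> sf_curve d) {0..} (of_real ` {.. - (r_sf d ^ d)})"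
    using bij_betw_cong by blast
  then have "inj_on (sf_curve d) {0..}" by (auto dest: bij_betw_imp_inj_on inj_on_imageI2)
  then show ?thesis using bij_betw_comp_iff[OF inj_on_imp_bij_betw] bij by blast
qed

lemma sf_upper_add_of_real:
  assumes "0 < Im w" "sf_arg d w \<le> pi" "0 < c"
  shows "w + of_real c \<in> sf_upper d"
  using sf_arg_add_of_real_less[OF assms(1,3), of d] assms by (simp add: sf_upper_def)

lemma sf_domain_add_of_real_upper:
  assumes "2 \<le> d" "w \<in> sf_domain d \<union> sf_curve d ` {0..}" "0 < c"
  shows "w + of_real c \<in> sf_domain d"
proof -
  have "(0 < Im w \<and> sf_arg d w \<le> pi) \<or> (Im w < 0 \<and> sf_arg d (cnj w) < pi)
      \<or> (Im w = 0 \<and> - 1 / real d \<le> Re w)"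
    using assms(2) by (auto simp: mem_sf_curve_iff[OF assms(1)] mem_sf_domain_iff)
  then consider "0 < Im w" "sf_arg d w \<le> pi" | "Im w < 0" "sf_arg d (cnj w) < pi"
    | "Im w = 0" "- 1 / real d \<le> Re w"
    by blast
  then show ?thesis
  proof cases
    case 1
    then show ?thesis using sf_upper_add_of_real[OF 1 assms(3)] by (simp add: sf_domain_def)
  next
    case 2
    then have "cnj w + of_real c \<in> sf_upper d" using assms(3)
      by (intro sf_upper_add_of_real) auto
    then show ?thesis by (simp add: sf_domain_def mem_cnj_image_iff)
  next
    case 3
    then show ?thesis using assms(3) by (simp add: mem_sf_domain_iff)
  qed
qed

lemma sf_domain_add_of_real:
  assumes "2 \<le> d" "w \<in> sf_domain d \<union> sf_curve d ` {0..} \<union> cnj ` sf_curve d ` {0..}" "0 < c"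
  shows "w + of_real c \<in> sf_domain d"
proof (cases "w \<in> cnj ` sf_curve d ` {0..}")
  case True
  then have "cnj w + of_real c \<in> sf_domain d"
    using assms by (intro sf_domain_add_of_real_upper) (auto simp: mem_cnj_image_iff)
  then show ?thesis using cnj_mem_sf_domain_iff[of "w + of_real c" d] by simp
next
  case False
  then show ?thesis using assms sf_domain_add_of_real_upper by blast
qed

lemma sf_curve_disjoint_sf_domain:
  assumes "2 \<le> d" "w \<in> sf_curve d ` {0..}"
  shows "w \<notin> sf_domain d"
  using assms(2) unfolding mem_sf_curve_iff[OF assms(1)] mem_sf_domain_iff by auto

lemma sf_arg_le_pi_if_closure:
  assumes "w \<in> closure (sf_domain d)" "0 < Im w"
  shows "sf_arg d w \<le> pi"
proof (rule ccontr)
  assume "\<not> sf_arg d w \<le> pi"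
  define V where "V = {w. 0 < Im w \<and> sf_arg d w \<in> {pi<..}}"
  have "open V" unfolding V_def by (rule open_sf_arg_vimage) simp
  moreover have "V \<inter> sf_domain d = {}" by (auto simp: V_def mem_sf_domain_iff)
  ultimately have "V \<inter> closure (sf_domain d) = {}" by (simp add: open_Int_closure_eq_empty)
  then show False using assms \<open>\<not> sf_arg d w \<le> pi\<close> by (auto simp: V_def)
qed

lemma cnj_mem_closure_sf_domain_iff: "cnj w \<in> closure (sf_domain d) \<longleftrightarrow> w \<in> closure (sf_domain d)"
proof -
  have "cnj ` sf_domain d = sf_domain d" by (auto simp: mem_cnj_image_iff cnj_mem_sf_domain_iff)
  then have "cnj ` closure (sf_domain d) = closure (sf_domain d)"
    using closure_injective_linear_image[of cnj "sf_domain d"] bounded_linear_cnj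
    by (simp add: bounded_linear.linear inj_on_def)
  then show ?thesis by (metis mem_cnj_image_iff)
qed

lemma frontier_sf_domain_subset:
  assumes "2 \<le> d"
  shows "frontier (sf_domain d) \<subseteq> sf_curve d ` {0..} \<union> cnj ` sf_curve d ` {0..}"
proof
  have fr: "frontier (sf_domain d) = closure (sf_domain d) - sf_domain d"
    using open_sf_domain[OF assms] by (simp add: frontier_def interior_open)
  have upper: "w \<in> sf_curve d ` {0..}" if "w \<in> frontier (sf_domain d)" "0 < Im w" for w
    using that sf_arg_le_pi_if_closure[of w d]
    by (auto simp: fr mem_sf_curve_iff[OF assms] mem_sf_domain_iff)
  fix w assume w: "w \<in> frontier (sf_domain d)"
  consider "0 < Im w" | "Im w < 0" | "Im w = 0" by linarith
  then show "w \<in> sf_curve d ` {0..} \<union> cnj ` sf_curve d ` {0..}"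
  proof cases
    case 1
    then show ?thesis using upper w by blast
  next
    case 2
    have "cnj w \<in> frontier (sf_domain d)"
      using w by (simp add: fr cnj_mem_closure_sf_domain_iff cnj_mem_sf_domain_iff)
    then show ?thesis using upper[of "cnj w"] 2 by (simp add: mem_cnj_image_iff)
  next
    case 3
    have "closure (sf_domain d) \<subseteq> {z. - 1 / real d \<le> Re z}"
      using sf_domain_Re_gt[OF assms]
      by (intro closure_minimal) (auto simp: closed_halfspace_Re_ge less_imp_le)
    then have "Re w = - 1 / real d" using w 3 by (force simp: fr mem_sf_domain_iff)
    then have "w = of_real (- 1 / real d)" using 3 by (simp add: complex_eq_iff)
    then show ?thesis by (simp add: mem_sf_curve_iff[OF assms])
  qed
qed

lemma sf_curve_subset_frontier_sf_domain:
  assumes "2 \<le> d"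
  shows "sf_curve d ` {0..} \<union> cnj ` sf_curve d ` {0..} \<subseteq> frontier (sf_domain d)"
proof
  fix w assume w: "w \<in> sf_curve d ` {0..} \<union> cnj ` sf_curve d ` {0..}"
  then have "w \<notin> sf_domain d"
    using sf_curve_disjoint_sf_domain[OF assms] cnj_mem_sf_domain_iff
    by (auto simp: mem_cnj_image_iff)
  moreover have "w \<in> closure (sf_domain d)"
    unfolding closure_approachable
  proof (intro allI impI)
    fix e :: real assume "0 < e"
    then have "w + of_real (e / 2) \<in> sf_domain d"
      using w by (intro sf_domain_add_of_real[OF assms]) auto
    moreover have "dist (w + of_real (e / 2)) w < e" using \<open>0 < e\<close>
      by (simp add: dist_norm)
    ultimately show "\<exists>y\<in>sf_domain d. dist y w < e" by blast
  qed
  ultimately show "w \<in> frontier (sf_domain d)"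
    using open_sf_domain[OF assms] by (simp add: frontier_def interior_open)
qed

lemma frontier_sf_domain:
  assumes "2 \<le> d"
  shows "frontier (sf_domain d) = sf_curve d ` {0..} \<union> cnj ` sf_curve d ` {0..}"
  using frontier_sf_domain_subset[OF assms] sf_curve_subset_frontier_sf_domain[OF assms]
  by (rule equalityI)

theorem lemma9p11:
  fixes d :: nat
  assumes "d \<ge> 2"
  shows "\<exists>(\<Omega> :: complex set) (\<gamma> :: real \<Rightarrow> complex).
     open \<Omega> \<and> connected \<Omega> \<and> simply_connected \<Omega> \<and>
     (\<forall>x::real. x > - 1 / real d \<longrightarrow> complex_of_real x \<in> \<Omega>) \<and>
     continuous_on {0..} \<gamma> \<and>
     \<gamma> 0 = complex_of_real (- 1 / real d) \<and>
     (\<forall>t>0. Im (\<gamma> t) > 0) \<and>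
     filterlim (\<lambda>t. norm (\<gamma> t)) at_top at_top \<and>
     frontier \<Omega> = \<gamma> ` {0..} \<union> cnj ` (\<gamma> ` {0..}) \<and>
     bij_betw (sf_map d) \<Omega>
        (UNIV - complex_of_real ` {.. - (r_sf d ^ d)}) \<and>
     bij_betw (sf_map d) (\<gamma> ` {0..}) (complex_of_real ` {.. - (r_sf d ^ d)}) \<and>
     (\<forall>w \<in> \<Omega> \<union> frontier \<Omega>. \<forall>c::real. c > 0 \<longrightarrow> w + complex_of_real c \<in> \<Omega>)"
proof (intro exI conjI)
  note frontier = frontier_sf_domain[OF assms]
  show "open (sf_domain d)" using open_sf_domain[OF assms] .
  show "simply_connected (sf_domain d)" using simply_connected_sf_domain[OF assms] .
  then show "connected (sf_domain d)" by (rule simply_connected_imp_connected)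
  show "\<forall>x::real. x > - 1 / real d \<longrightarrow> complex_of_real x \<in> sf_domain d"
    by (simp add: mem_sf_domain_iff)
  show "continuous_on {0..} (sf_curve d)" using continuous_on_sf_curve[OF assms] .
  show "sf_curve d 0 = complex_of_real (- 1 / real d)" by (rule sf_curve_0)
  show "\<forall>t>0. Im (sf_curve d t) > 0" using sf_curve_upper(1)[OF assms] by blast
  show "filterlim (\<lambda>t. norm (sf_curve d t)) at_top at_top"
    using filterlim_norm_sf_curve[OF assms] .
  show "frontier (sf_domain d) = sf_curve d ` {0..} \<union> cnj ` (sf_curve d ` {0..})"
    by (rule frontier)
  show "bij_betw (sf_map d) (sf_domain d) (UNIV - complex_of_real ` {.. - (r_sf d ^ d)})"
    using sf_domain_bij[OF assms] .
  show "bij_betw (sf_map d) (sf_curve d ` {0..}) (complex_of_real ` {.. - (r_sf d ^ d)})"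
    using sf_curve_bij[OF assms] .
  show "\<forall>w \<in> sf_domain d \<union> frontier (sf_domain d). \<forall>c::real. c > 0 \<longrightarrow> w + complex_of_real c \<in> sf_domain d"
    using sf_domain_add_of_real[OF assms] unfolding frontier by blast
qed

end
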